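(* Let $q$ be a prime power, $n$ a positive integer, $a\in\mathbb{F}_q$, let $l$ be a divisor of $q^n-1$, and let $p_1,\ldots,p_r$ be all the primes dividing $q^n-1$ but not $l$. Then $$N_a(q^n-1,q^n-1)\geq \sum_{i=1}^r N_a(p_il,l)+\sum_{i=1}^r N_a(l,p_il)-(2r-1)N_a(l,l).$$
   Context: For a divisor $e$ of $q^n-1$, an element $\xi\in\mathbb{F}_{q^n}^*$ is $e$-free if whenever $\xi=\gamma^d$ with $d\mid e$ and $\gamma\in\mathbb{F}_{q^n}$, we must have $d=1$. For divisors $l_1,l_2$ of $q^n-1$ and $a\in\mathbb{F}_q$, $N_a(l_1,l_2)$ is the number of $\alpha\in\mathbb{F}_{q^n}^*$ such that $\alpha$ is $l_1$-free, $\alpha+\alpha^{-1}$ is nonzero and $l_2$-free, and $\mathrm{Tr}_{\mathbb{F}_{q^n}|\mathbb{F}_q}(\alpha)=a$, where $\mathrm{Tr}_{\mathbb{F}_{q^n}|\mathbb{F}_q}(\alpha)=\alpha+\alpha^q+\cdots+\alpha^{q^{n-1}}$. *)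

theory Defs
  imports "HOL-Computational_Algebra.Primes" "HOL-Library.Cardinality"
begin

text \<open>The field F_{q^n} is modelled as a finite field type 'a with CARD('a) = q^n;
  the subfield F_q is its set of elements fixed by x |-> x^q.\<close>

definition is_free :: "nat \<Rightarrow> 'a::field \<Rightarrow> bool" where
  "is_free e \<xi> \<longleftrightarrow> \<xi> \<noteq> 0 \<and> (\<forall>d (\<gamma>::'a). d dvd e \<and> \<xi> = \<gamma> ^ d \<longrightarrow> d = 1)"

definition trace_ext :: "nat \<Rightarrow> nat \<Rightarrow> 'a::field \<Rightarrow> 'a" where
  "trace_ext q n \<alpha> = (\<Sum>i<n. \<alpha> ^ (q ^ i))"

definition N_count :: "nat \<Rightarrow> nat \<Rightarrow> 'a::{field,finite} \<Rightarrow> nat \<Rightarrow> nat \<Rightarrow> nat" where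
  "N_count q n a l1 l2 = card {\<alpha>::'a. \<alpha> \<noteq> 0 \<and> is_free l1 \<alpha> \<and> \<alpha> + inverse \<alpha> \<noteq> 0
      \<and> is_free l2 (\<alpha> + inverse \<alpha>) \<and> trace_ext q n \<alpha> = a}"

end

theory Submission
  imports Defs
begin

text \<open>An element is (q^n-1)-free as soon as it is p-free for every prime p dividing q^n-1;
  for p dividing l this follows from l-freeness, for the remaining primes from
  (p l)-freeness. Hence every element counted by N_a(l,l) that satisfies all 2r
  conditions "(p l)-free" on alpha resp. on alpha + alpha^-1 is counted by
  N_a(q^n-1,q^n-1), and the sieve bound |B \<inter> A_1 \<inter> ... \<inter> A_k| \<ge> \<Sigma>|A_i| - (k-1)|B|
  for subsets A_i of B gives the inequality. Neither the trace condition nor the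
  hypotheses on q and a play any role beyond making q^n - 1 nonzero.\<close>

lemma card_Int_ge_sum_card:
  fixes A :: "'i \<Rightarrow> 'b set"
  assumes "finite I" and "finite B" and "\<And>i. i \<in> I \<Longrightarrow> A i \<subseteq> B"
  shows "(\<Sum>i\<in>I. int (card (A i))) - (int (card I) - 1) * int (card B)
      \<le> int (card (B \<inter> (\<Inter>i\<in>I. A i)))"
  using assms
proof (induction I rule: finite_induct)
  case empty
  then show ?case by simp
next
  case (insert j I)
  let ?X = "B \<inter> (\<Inter>i\<in>I. A i)"
  have "card (A j) + card ?X = card (A j \<union> ?X) + card (A j \<inter> ?X)"
    using insert.prems by (intro card_Un_Int) (auto intro: finite_subset)
  moreover have "card (A j \<union> ?X) \<le> card B"
    using insert.prems by (intro card_mono) auto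
  moreover have "A j \<inter> ?X = B \<inter> (\<Inter>i\<in>insert j I. A i)"
    by auto
  moreover have "(\<Sum>i\<in>I. int (card (A i))) - (int (card I) - 1) * int (card B) \<le> int (card ?X)"
    using insert by simp
  ultimately show ?case
    using insert.hyps by (simp add: algebra_simps)
qed

lemma is_free_dvd:
  assumes "is_free e x" and "e' dvd e"
  shows "is_free e' x"
  using assms dvd_trans unfolding is_free_def by blast

lemma is_free_if_prime_free:
  assumes "x \<noteq> 0" and "\<And>p. prime p \<Longrightarrow> p dvd e \<Longrightarrow> is_free p x"
  shows "is_free e x"
  unfolding is_free_def
proof (intro conjI allI impI)
  fix d and g :: 'a
  assume "d dvd e \<and> x = g ^ d"
  show "d = 1"
  proof (rule ccontr)
    assume "d \<noteq> 1"
    then obtain p m where p: "prime p" and d: "d = p * m"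
      using prime_factor_nat by (metis dvdE)
    then have "p dvd e"
      using \<open>d dvd e \<and> x = g ^ d\<close> dvd_mult_left by blast
    moreover have "x = (g ^ m) ^ p"
      using \<open>d dvd e \<and> x = g ^ d\<close> d by (metis power_mult mult.commute)
    ultimately have "p = 1"
      using assms(2)[OF p] dvd_refl unfolding is_free_def by blast
    with p show False
      by simp
  qed
qed (use assms(1) in simp)

lemma is_free_if_free_prime_multiples:
  assumes "is_free l x"
    and "\<And>p. prime p \<Longrightarrow> p dvd e \<Longrightarrow> \<not> p dvd l \<Longrightarrow> is_free (p * l) x"
  shows "is_free e x"
proof (rule is_free_if_prime_free)
  show "x \<noteq> 0"
    using assms(1) unfolding is_free_def by simp
  show "is_free p x" if "prime p" "p dvd e" for p
  proof (cases "p dvd l")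
    case True
    with assms(1) show ?thesis by (rule is_free_dvd)
  next
    case False
    with that have "is_free (p * l) x"
      by (rule assms(2))
    then show ?thesis by (rule is_free_dvd) simp
  qed
qed

lemma N_count_sieve:
  fixes a :: "'a::{field,finite}"
  assumes "finite P"
    and free: "\<And>x::'a. is_free l x \<Longrightarrow> (\<forall>p\<in>P. is_free (p * l) x) \<Longrightarrow> is_free e x"
  shows "int (N_count q n a e e)
      \<ge> (\<Sum>p\<in>P. int (N_count q n a (p * l) l)) + (\<Sum>p\<in>P. int (N_count q n a l (p * l)))
        - (2 * int (card P) - 1) * int (N_count q n a l l)"
proof -
  define S where "S e1 e2 = {\<alpha>::'a. \<alpha> \<noteq> 0 \<and> is_free e1 \<alpha> \<and> \<alpha> + inverse \<alpha> \<noteq> 0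
      \<and> is_free e2 (\<alpha> + inverse \<alpha>) \<and> trace_ext q n \<alpha> = a}" for e1 e2
  define A where "A = case_sum (\<lambda>p. S (p * l) l) (\<lambda>p. S l (p * l))"
  have "A i \<subseteq> S l l" for i
    unfolding A_def S_def by (cases i) (auto elim: is_free_dvd)
  then have "(\<Sum>i\<in>P <+> P. int (card (A i))) - (int (card (P <+> P)) - 1) * int (card (S l l))
      \<le> int (card (S l l \<inter> (\<Inter>i\<in>P <+> P. A i)))"
    using \<open>finite P\<close> by (intro card_Int_ge_sum_card) auto
  also have "\<dots> \<le> int (card (S e e))"
  proof (intro of_nat_mono card_mono subsetI)
    fix x
    assume x: "x \<in> S l l \<inter> (\<Inter>i\<in>P <+> P. A i)"
    then have "x \<in> A (Inl p)" "x \<in> A (Inr p)" if "p \<in> P" for p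
      using that by blast+
    then have "x \<in> S (p * l) l" "x \<in> S l (p * l)" if "p \<in> P" for p
      using that unfolding A_def by auto
    with x show "x \<in> S e e"
      using free unfolding S_def by auto
  qed simp
  finally show ?thesis
    using \<open>finite P\<close> unfolding N_count_def S_def[symmetric]
    by (simp add: sum.Plus card_Plus A_def comp_def algebra_simps)
qed

theorem lemma3p3:
  fixes q n l :: nat and a :: "'a::{field,finite}"
  assumes "\<exists>p k. prime p \<and> k > 0 \<and> q = p ^ k"
    and "n > 0"
    and "CARD('a) = q ^ n"
    and "a ^ q = a"
    and "l dvd q ^ n - 1"
  shows "let P = {p::nat. prime p \<and> p dvd q ^ n - 1 \<and> \<not> p dvd l}; r = card P in
    int (N_count q n a (q ^ n - 1) (q ^ n - 1))
      \<ge> (\<Sum>p\<in>P. int (N_count q n a (p * l) l)) + (\<Sum>p\<in>P. int (N_count q n a l (p * l)))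
        - (2 * int r - 1) * int (N_count q n a l l)"
proof -
  define P where "P = {p::nat. prime p \<and> p dvd q ^ n - 1 \<and> \<not> p dvd l}"
  have "card {0, 1::'a} \<le> CARD('a)"
    by (rule card_mono) auto
  then have "q ^ n - 1 \<noteq> 0"
    using assms(3) by simp
  then have "P \<subseteq> {..q ^ n - 1}"
    unfolding P_def by (auto dest: dvd_imp_le)
  then have "finite P"
    using finite_subset by blast
  moreover have "is_free (q ^ n - 1) x"
    if "is_free l x" and "\<forall>p\<in>P. is_free (p * l) x" for x :: 'a
  proof (rule is_free_if_free_prime_multiples[OF that(1)])
    show "is_free (p * l) x" if "prime p" "p dvd q ^ n - 1" "\<not> p dvd l" for p
      using that \<open>\<forall>p\<in>P. is_free (p * l) x\<close> unfolding P_def by blast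
  qed
  ultimately show ?thesis
    unfolding Let_def P_def[symmetric] by (rule N_count_sieve)
qed

end
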